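(* There exists an absolute constant $C>0$ such that for any integers $m\ge2$ and $M\ge m$, $$\sum_{0\le j_1<j_2<\dots<j_m<M}\ \prod_{k=1}^{m-1}\frac{j_{k+1}-j_k}{j_k+1}\le \log(M+1)\left(\frac{CM}{m^2}\right)^m,$$ where the sum is over all integer vectors $(j_1,\dots,j_m)$ with $0\le j_1<\dots<j_m<M$. *)

theory Defs
  imports "HOL-Analysis.Analysis"
begin

text \<open>Integer vectors (j_1,...,j_m) with 0 \<le> j_1 < ... < j_m < M, represented as
  functions nat \<Rightarrow> nat on the index set {1..m}, extended by 0 outside {1..m}
  (so that each vector is represented exactly once).\<close>
definition incr_vecs :: "nat \<Rightarrow> nat \<Rightarrow> (nat \<Rightarrow> nat) set" where
  "incr_vecs m M = {j. (\<forall>k. k \<notin> {1..m} \<longrightarrow> j k = 0)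
                     \<and> (\<forall>k\<in>{1..<m}. j k < j (Suc k))
                     \<and> (\<forall>k\<in>{1..m}. j k < M)}"

end

theory Submission
  imports Defs
begin

text \<open>For \<open>r \<ge> 1\<close> let \<open>T r y\<close> be the sum of the products over the increasing vectors
  \<open>(j\<^sub>1, \<dots>, j\<^sub>r)\<close> with \<open>j\<^sub>r = y\<close>. Splitting off the last entry gives \<open>T 1 y = 1\<close> and
  \<open>T (r + 1) z = (\<Sum>y<z. T r y * (z - y) / (y + 1))\<close>. The harmonic sum bounds
  \<open>T 2 y \<le> 2 (y + 1) ln (M + 1)\<close>, and the estimate
  \<open>(\<Sum>y<z. (y + 1)\<^sup>s (z - y)) \<le> (z + 2)\<^sup>s\<^sup>+\<^sup>2 / ((s + 1) (s + 2))\<close> carries the bound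
  \<open>T (s + 2) y \<le> 2 ln (M + 1) 200\<^sup>s\<^sup>+\<^sup>2 (y + 1)\<^sup>s\<^sup>+\<^sup>1 / (s + 2)\<^sup>2\<^sup>s\<^sup>+\<^sup>4\<close> through the
  recursion: the factor \<open>1 / ((s + 1) (s + 2))\<close> gained in each step pays for the growth of the
  denominator, since \<open>((s + 3) / (s + 2))\<^sup>2\<^sup>s\<^sup>+\<^sup>4 \<le> e\<^sup>2\<close>. Summing over \<open>j\<^sub>m = y < M\<close>
  gives the claim with \<open>C = 400\<close>.\<close>

lemma power_add_one_ge_two_terms:
  fixes x :: real
  assumes "x \<ge> 0"
  shows "x ^ (n + 1) + real (n + 1) * x ^ n \<le> (x + 1) ^ (n + 1)"
proof (induction n)
  case 0
  then show ?case by simp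
next
  case (Suc n)
  have "x ^ (Suc n + 1) + real (Suc n + 1) * x ^ Suc n
      \<le> (x + 1) * (x ^ (n + 1) + real (n + 1) * x ^ n)"
    using assms by (simp add: algebra_simps)
  also have "\<dots> \<le> (x + 1) * (x + 1) ^ (n + 1)"
    using Suc assms by (intro mult_left_mono) auto
  finally show ?case by simp
qed

lemma sum_power_le:
  fixes a :: real
  assumes "a \<ge> 0"
  shows "(\<Sum>y\<le>z. (real y + a) ^ s) \<le> (real z + a + 1) ^ (s + 1) / real (s + 1)"
proof (induction z)
  case 0
  have "a ^ (s + 1) + real (s + 1) * a ^ s \<le> (a + 1) ^ (s + 1)" "a ^ (s + 1) \<ge> 0"
    using power_add_one_ge_two_terms[OF assms] assms by simp_all
  then show ?case by (simp add: field_simps)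
next
  case (Suc z)
  define w where "w = real z + a + 1"
  have "w \<ge> 0" using assms by (simp add: w_def)
  have "(\<Sum>y\<le>Suc z. (real y + a) ^ s) \<le> w ^ (s + 1) / real (s + 1) + w ^ s"
    using Suc by (simp add: w_def add_ac)
  also have "\<dots> = (w ^ (s + 1) + real (s + 1) * w ^ s) / real (s + 1)"
    by (simp add: field_simps)
  also have "\<dots> \<le> (w + 1) ^ (s + 1) / real (s + 1)"
    using power_add_one_ge_two_terms[OF \<open>w \<ge> 0\<close>] by (intro divide_right_mono) auto
  finally show ?case by (simp add: w_def add_ac)
qed

lemma sum_power_times_distance_le:
  fixes a :: real
  assumes "a \<ge> 0"
  shows "(\<Sum>y<z. (real y + a) ^ s * (real z - real y))
    \<le> (real z + a + 1) ^ (s + 2) / (real (s + 1) * real (s + 2))"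
proof (induction z)
  case 0
  show ?case using assms by simp
next
  case (Suc z)
  define w where "w = real z + a + 1"
  have "w \<ge> 0" using assms by (simp add: w_def)
  have "(\<Sum>y<Suc z. (real y + a) ^ s * (real (Suc z) - real y))
      = (\<Sum>y<z. (real y + a) ^ s * (real z - real y)) + (\<Sum>y\<le>z. (real y + a) ^ s)"
    by (simp add: lessThan_Suc_atMost[symmetric] sum.distrib[symmetric] algebra_simps)
  also have "\<dots> \<le> w ^ (s + 2) / (real (s + 1) * real (s + 2)) + w ^ (s + 1) / real (s + 1)"
    using Suc sum_power_le[OF assms, where z = z and s = s] by (simp add: w_def)
  also have "\<dots> = (w ^ (s + 2) + real (s + 2) * w ^ (s + 1)) / (real (s + 1) * real (s + 2))"
    by (simp add: add_divide_distrib)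
  also have "\<dots> \<le> (w + 1) ^ (s + 2) / (real (s + 1) * real (s + 2))"
    using power_add_one_ge_two_terms[OF \<open>w \<ge> 0\<close>, of "s + 1"]
    by (intro divide_right_mono) (auto simp: add_ac)
  finally show ?case by (simp add: w_def add_ac)
qed

lemma power_add_one_le_three_times:
  fixes x :: real
  assumes "x > 0" "real n \<le> x"
  shows "(x + 1) ^ n \<le> 3 * x ^ n"
proof -
  have "(x + 1) ^ n = (1 + 1 / x) ^ n * x ^ n"
    using assms by (simp add: field_simps flip: power_mult_distrib)
  also have "(1 + 1 / x) ^ n \<le> exp (1 / x) ^ n"
    using assms by (intro power_mono) auto
  also have "exp (1 / x) ^ n = exp (real n / x)"
    by (simp flip: exp_of_nat_mult)
  also have "\<dots> \<le> 3"
    using assms exp_le by (smt (verit) divide_le_eq_1 exp_mono)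
  finally show ?thesis using assms by (simp add: mult_right_mono)
qed

lemma harmonic_sum_le_two_ln:
  "(\<Sum>x<y. 1 / (real x + 1)) \<le> 2 * ln (real y + 1)"
proof (induction y)
  case 0
  then show ?case by simp
next
  case (Suc y)
  have "ln ((real y + 1) / (real y + 2)) \<le> (real y + 1) / (real y + 2) - 1"
    by (rule ln_le_minus_one) simp
  then have "ln (real y + 1) - ln (real y + 2) \<le> - 1 / (real y + 2)"
    by (simp add: ln_div field_simps)
  moreover have "1 / (real y + 1) \<le> 2 / (real y + 2)"
    by (simp add: field_simps)
  ultimately show ?case using Suc by (simp add: add_ac)
qed

lemma constant_growth_step:
  "3 / ((real s + 1) * (real s + 2) ^ (2 * s + 5)) \<le> 200 / (real s + 3) ^ (2 * s + 6)"
proof -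
  define a where "a = real s + 2"
  have "(a + 1) ^ (s + 2) \<le> 3 * a ^ (s + 2)"
    by (rule power_add_one_le_three_times) (simp_all add: a_def)
  then have "((a + 1) ^ (s + 2)) ^ 2 \<le> (3 * a ^ (s + 2)) ^ 2"
    by (rule power_mono) (simp add: a_def)
  moreover have "2 * s + 4 = (s + 2) * 2" by simp
  ultimately have sq: "(a + 1) ^ (2 * s + 4) \<le> 9 * a ^ (2 * s + 4)"
    by (simp only: power_mult power_mult_distrib) simp
  have "3 * (a + 1) ^ ((2 * s + 4) + 2) = 3 * (a + 1) ^ (2 * s + 4) * (a + 1) ^ 2"
    by (simp flip: power_add)
  also have "\<dots> \<le> 3 * (9 * a ^ (2 * s + 4)) * (a + 1) ^ 2"
    using sq by (intro mult_right_mono mult_left_mono) auto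
  also have "\<dots> = a ^ (2 * s + 4) * (27 * (a + 1) ^ 2)"
    by simp
  also have "\<dots> \<le> a ^ (2 * s + 4) * (200 * (real s + 1) * a)"
    by (intro mult_left_mono) (simp_all add: a_def power2_eq_square algebra_simps)
  also have "\<dots> = 200 * (real s + 1) * a ^ (2 * s + 5)"
    by (simp add: add.commute flip: power_Suc2)
  finally have "3 * (real s + 3) ^ (2 * s + 6) \<le> 200 * (real s + 1) * (real s + 2) ^ (2 * s + 5)"
    by (simp add: a_def add_ac numeral_eq_Suc)
  then show ?thesis
    by (simp add: divide_simps mult.assoc) (simp add: algebra_simps)
qed

text \<open>\<open>weight_sum r y\<close> is \<open>T r y\<close>; the value at \<open>r = 0\<close> is a dummy.\<close>

fun weight_sum :: "nat \<Rightarrow> nat \<Rightarrow> real" where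
  "weight_sum 0 y = 0"
| "weight_sum (Suc 0) y = 1"
| "weight_sum (Suc (Suc r)) z =
     (\<Sum>y<z. weight_sum (Suc r) y * (real z - real y) / (real y + 1))"

lemma weight_sum_eq_0: "y + 1 < Suc r \<Longrightarrow> weight_sum (Suc r) y = 0"
  by (induction r arbitrary: y) auto

lemma weight_sum_2_le:
  assumes "y < M"
  shows "weight_sum 2 y \<le> 2 * ln (real M + 1) * (real y + 1)"
proof -
  have "weight_sum 2 y = (\<Sum>x<y. (real y - real x) / (real x + 1))"
    by (simp add: numeral_2_eq_2)
  also have "\<dots> \<le> real y * (\<Sum>x<y. 1 / (real x + 1))"
    by (simp add: sum_distrib_left divide_right_mono sum_mono)
  also have "\<dots> \<le> real y * (2 * ln (real y + 1))"
    by (intro mult_left_mono harmonic_sum_le_two_ln) auto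
  also have "\<dots> \<le> (real y + 1) * (2 * ln (real M + 1))"
    using assms by (intro mult_mono) auto
  finally show ?thesis by (simp add: ac_simps)
qed

lemma weight_sum_Suc_le:
  assumes "K \<ge> 0" "s + 1 \<le> y"
    and bound: "\<And>x. x < y \<Longrightarrow> weight_sum (Suc (Suc s)) x \<le> K * (real x + 1) ^ (s + 1)"
  shows "weight_sum (Suc (Suc (Suc s))) y
    \<le> 3 * K * (real y + 1) ^ (s + 2) / (real (s + 1) * real (s + 2))"
proof -
  have "weight_sum (Suc (Suc (Suc s))) y
      = (\<Sum>x<y. weight_sum (Suc (Suc s)) x * (real y - real x) / (real x + 1))"
    by simp
  also have "\<dots> \<le> (\<Sum>x<y. K * ((real x + 1) ^ s * (real y - real x)))"
  proof (intro sum_mono)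
    fix x assume "x \<in> {..<y}"
    then have "weight_sum (Suc (Suc s)) x * (real y - real x) / (real x + 1)
        \<le> K * (real x + 1) ^ (s + 1) * (real y - real x) / (real x + 1)"
      using bound by (intro divide_right_mono mult_right_mono) auto
    also have "\<dots> = K * ((real x + 1) ^ s * (real y - real x))"
      by (simp add: field_simps)
    finally show "weight_sum (Suc (Suc s)) x * (real y - real x) / (real x + 1)
        \<le> K * ((real x + 1) ^ s * (real y - real x))" .
  qed
  also have "\<dots> = K * (\<Sum>x<y. (real x + 1) ^ s * (real y - real x))"
    by (simp add: sum_distrib_left)
  also have "\<dots> \<le> K * ((real y + 1 + 1) ^ (s + 2) / (real (s + 1) * real (s + 2)))"
    using assms(1) by (intro mult_left_mono sum_power_times_distance_le) auto
  also have "\<dots> \<le> K * (3 * (real y + 1) ^ (s + 2) / (real (s + 1) * real (s + 2)))"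
    using assms(1,2) by (intro mult_left_mono divide_right_mono power_add_one_le_three_times) auto
  also have "\<dots> = 3 * K * (real y + 1) ^ (s + 2) / (real (s + 1) * real (s + 2))"
    by simp
  finally show ?thesis .
qed

lemma weight_sum_le:
  assumes "y < M"
  shows "weight_sum (Suc (Suc s)) y
    \<le> 2 * ln (real M + 1) * 200 ^ (s + 2) * (real y + 1) ^ (s + 1) / (real s + 2) ^ (2 * s + 4)"
  using assms
proof (induction s arbitrary: y)
  case 0
  have "weight_sum 2 y \<le> 2 * ln (real M + 1) * (real y + 1)"
    using 0 by (rule weight_sum_2_le)
  moreover have "(real y + 1) * ln (real M + 1) \<ge> 0" by simp
  moreover have "2 * ln (real M + 1) * (real y + 1) = 2 * ((real y + 1) * ln (real M + 1))"
    by simp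
  ultimately have "weight_sum 2 y \<le> 5000 * ((real y + 1) * ln (real M + 1))" by linarith
  then show ?case by (simp add: numeral_2_eq_2[symmetric])
next
  case (Suc s)
  define L where "L = 2 * ln (real M + 1)"
  define K where "K = L * 200 ^ (s + 2) / (real s + 2) ^ (2 * s + 4)"
  have "L \<ge> 0" by (simp add: L_def)
  show ?case
  proof (cases "y < s + 2")
    case True
    then show ?thesis by (simp add: weight_sum_eq_0)
  next
    case False
    have "weight_sum (Suc (Suc (Suc s))) y
        \<le> 3 * K * (real y + 1) ^ (s + 2) / (real (s + 1) * real (s + 2))"
      using False Suc by (intro weight_sum_Suc_le) (auto simp: K_def L_def)
    also have "\<dots> = L * (real y + 1) ^ (s + 2) * 200 ^ (s + 2)
        * (3 / ((real s + 1) * (real s + 2) ^ (2 * s + 5)))"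
    proof -
      have "(real s + 2) ^ (2 * s + 5) = (real s + 2) ^ (2 * s + 4) * (real s + 2)"
        by (simp add: add.commute flip: power_Suc2)
      then show ?thesis by (simp add: K_def field_simps)
    qed
    also have "\<dots> \<le> L * (real y + 1) ^ (s + 2) * 200 ^ (s + 2) * (200 / (real s + 3) ^ (2 * s + 6))"
      using constant_growth_step[of s] \<open>L \<ge> 0\<close> by (intro mult_left_mono) simp_all
    also have "\<dots> = L * 200 ^ (Suc s + 2) * (real y + 1) ^ (Suc s + 1)
        / (real (Suc s) + 2) ^ (2 * Suc s + 4)"
      by (simp add: field_simps)
    finally show ?thesis by (simp add: L_def)
  qed
qed

definition incr_vecs_ending :: "nat \<Rightarrow> nat \<Rightarrow> (nat \<Rightarrow> nat) set" where
  "incr_vecs_ending r y = {j. (\<forall>k. k \<notin> {1..r} \<longrightarrow> j k = 0)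
                             \<and> (\<forall>k\<in>{1..<r}. j k < j (Suc k)) \<and> j r = y}"

definition gap_weight :: "nat \<Rightarrow> (nat \<Rightarrow> nat) \<Rightarrow> real" where
  "gap_weight r j = (\<Prod>k\<in>{1..<r}. (real (j (Suc k)) - real (j k)) / (real (j k) + 1))"

lemma incr_le_last:
  fixes j :: "nat \<Rightarrow> nat"
  assumes "\<forall>k\<in>{1..<r}. j k < j (Suc k)" "1 \<le> k" "k \<le> r"
  shows "j k \<le> j r"
  using assms(3)
proof (induction r rule: dec_induct)
  case (step n)
  then show ?case using assms(1,2) by (meson atLeastLessThan_iff le_trans less_imp_le_nat)
qed simp

lemma incr_vecs_ending_disjoint: "x \<noteq> x' \<Longrightarrow> incr_vecs_ending r x \<inter> incr_vecs_ending r x' = {}"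
  by (auto simp: incr_vecs_ending_def)

lemma finite_incr_vecs_ending: "finite (incr_vecs_ending r y)"
proof (rule finite_subset)
  show "incr_vecs_ending r y
      \<subseteq> {f. \<forall>x. (x \<in> {1..r} \<longrightarrow> f x \<in> {..y}) \<and> (x \<notin> {1..r} \<longrightarrow> f x = 0)}"
    using incr_le_last by (fastforce simp: incr_vecs_ending_def)
  show "finite {f. \<forall>x. (x \<in> {1..r} \<longrightarrow> f x \<in> {..y}) \<and> (x \<notin> {1..r} \<longrightarrow> f x = (0::nat))}"
    by (rule finite_set_of_finite_funs) auto
qed

lemma incr_vecs_ending_Suc:
  assumes "1 \<le> r"
  shows "incr_vecs_ending (Suc r) z = (\<lambda>j. j(Suc r := z)) ` (\<Union>y<z. incr_vecs_ending r y)"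
proof
  show "incr_vecs_ending (Suc r) z \<subseteq> (\<lambda>j. j(Suc r := z)) ` (\<Union>y<z. incr_vecs_ending r y)"
  proof
    fix j assume "j \<in> incr_vecs_ending (Suc r) z"
    then have "j(Suc r := 0) \<in> incr_vecs_ending r (j r)" "j r < z" "j = (j(Suc r := 0))(Suc r := z)"
      using assms by (auto simp: incr_vecs_ending_def)
    then show "j \<in> (\<lambda>j. j(Suc r := z)) ` (\<Union>y<z. incr_vecs_ending r y)" by blast
  qed
  show "(\<lambda>j. j(Suc r := z)) ` (\<Union>y<z. incr_vecs_ending r y) \<subseteq> incr_vecs_ending (Suc r) z"
    by (auto simp: incr_vecs_ending_def less_Suc_eq)
qed

lemma inj_on_extend_incr_vecs_ending:
  "inj_on (\<lambda>j. j(Suc r := z)) (\<Union>y\<in>Y. incr_vecs_ending r y)"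
proof (rule inj_onI)
  fix a b assume "a \<in> (\<Union>y\<in>Y. incr_vecs_ending r y)" "b \<in> (\<Union>y\<in>Y. incr_vecs_ending r y)"
    and "a(Suc r := z) = b(Suc r := z)"
  moreover have "a (Suc r) = 0" "b (Suc r) = 0"
    using calculation(1,2) by (auto simp: incr_vecs_ending_def)
  ultimately show "a = b" by (metis fun_upd_idem_iff fun_upd_upd)
qed

lemma gap_weight_extend:
  assumes "1 \<le> r" "j \<in> incr_vecs_ending r y"
  shows "gap_weight (Suc r) (j(Suc r := z)) = (real z - real y) / (real y + 1) * gap_weight r j"
proof -
  have "j r = y" using assms(2) by (simp add: incr_vecs_ending_def)
  moreover have "{1..<Suc r} = insert r {1..<r}" using assms(1) by auto
  ultimately show ?thesis
    unfolding gap_weight_def by (simp add: prod.insert)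
qed

lemma sum_gap_weight_eq_weight_sum:
  "(\<Sum>j\<in>incr_vecs_ending (Suc r) y. gap_weight (Suc r) j) = weight_sum (Suc r) y"
proof (induction r arbitrary: y)
  case 0
  have "incr_vecs_ending (Suc 0) y = {(\<lambda>_. 0)(1 := y)}"
    by (auto simp: incr_vecs_ending_def fun_eq_iff)
  then show ?case by (simp add: gap_weight_def)
next
  case (Suc r)
  have "(\<Sum>j\<in>incr_vecs_ending (Suc (Suc r)) y. gap_weight (Suc (Suc r)) j)
      = (\<Sum>j\<in>(\<Union>x<y. incr_vecs_ending (Suc r) x). gap_weight (Suc (Suc r)) (j(Suc (Suc r) := y)))"
    unfolding incr_vecs_ending_Suc[of "Suc r" y, simplified]
    by (rule sum.reindex[OF inj_on_extend_incr_vecs_ending, unfolded comp_def])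
  also have "\<dots> = (\<Sum>x<y. \<Sum>j\<in>incr_vecs_ending (Suc r) x. gap_weight (Suc (Suc r)) (j(Suc (Suc r) := y)))"
    by (rule sum.UNION_disjoint) (auto simp: finite_incr_vecs_ending incr_vecs_ending_disjoint)
  also have "\<dots> = (\<Sum>x<y. \<Sum>j\<in>incr_vecs_ending (Suc r) x. (real y - real x) / (real x + 1) * gap_weight (Suc r) j)"
    by (intro sum.cong refl gap_weight_extend) auto
  also have "\<dots> = (\<Sum>x<y. (real y - real x) / (real x + 1) * weight_sum (Suc r) x)"
    by (simp only: sum_distrib_left[symmetric] Suc.IH)
  finally show ?case by (simp add: mult.commute)
qed

lemma incr_vecs_eq_Union_ending:
  assumes "1 \<le> m"
  shows "incr_vecs m M = (\<Union>y<M. incr_vecs_ending m y)"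
proof
  show "incr_vecs m M \<subseteq> (\<Union>y<M. incr_vecs_ending m y)"
    using assms by (fastforce simp: incr_vecs_def incr_vecs_ending_def)
  show "(\<Union>y<M. incr_vecs_ending m y) \<subseteq> incr_vecs m M"
    using incr_le_last by (fastforce simp: incr_vecs_def incr_vecs_ending_def intro: le_less_trans)
qed

lemma sum_incr_vecs_eq_sum_weight_sum:
  assumes "1 \<le> m"
  shows "(\<Sum>j\<in>incr_vecs m M. gap_weight m j) = (\<Sum>y<M. weight_sum m y)"
proof -
  obtain r where "m = Suc r" using assms by (cases m) auto
  have "(\<Sum>j\<in>incr_vecs m M. gap_weight m j) = (\<Sum>y<M. \<Sum>j\<in>incr_vecs_ending m y. gap_weight m j)"
    unfolding incr_vecs_eq_Union_ending[OF assms]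
    by (rule sum.UNION_disjoint) (auto simp: finite_incr_vecs_ending incr_vecs_ending_disjoint)
  then show ?thesis
    using sum_gap_weight_eq_weight_sum \<open>m = Suc r\<close> by simp
qed

lemma sum_gap_weight_le:
  "(\<Sum>j\<in>incr_vecs (Suc (Suc s)) M. gap_weight (Suc (Suc s)) j)
    \<le> 2 * 200 ^ (s + 2) * (ln (real M + 1) * real M ^ (s + 2) / (real s + 2) ^ (2 * s + 4))"
proof -
  define B where "B = 2 * ln (real M + 1) * 200 ^ (s + 2) / (real s + 2) ^ (2 * s + 4)"
  have "(\<Sum>j\<in>incr_vecs (Suc (Suc s)) M. gap_weight (Suc (Suc s)) j)
      = (\<Sum>y<M. weight_sum (Suc (Suc s)) y)"
    by (intro sum_incr_vecs_eq_sum_weight_sum) simp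
  also have "\<dots> \<le> (\<Sum>y<M. B * real M ^ (s + 1))"
  proof (intro sum_mono)
    fix y assume "y \<in> {..<M}"
    then have "weight_sum (Suc (Suc s)) y \<le> B * (real y + 1) ^ (s + 1)"
      using weight_sum_le[of y M s] by (simp add: B_def)
    also have "\<dots> \<le> B * real M ^ (s + 1)"
      using \<open>y \<in> {..<M}\<close> by (intro mult_left_mono power_mono) (auto simp: B_def)
    finally show "weight_sum (Suc (Suc s)) y \<le> B * real M ^ (s + 1)" .
  qed
  also have "\<dots> = 2 * 200 ^ (s + 2) * (ln (real M + 1) * real M ^ (s + 2) / (real s + 2) ^ (2 * s + 4))"
    by (simp add: B_def)
  finally show ?thesis .
qed

theorem corollary6p3:
  shows "\<exists>C::real. C > 0 \<and>
    (\<forall>m M :: nat. 2 \<le> m \<longrightarrow> m \<le> M \<longrightarrow>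
      (\<Sum>j\<in>incr_vecs m M. \<Prod>k\<in>{1..<m}.
          (real (j (Suc k)) - real (j k)) / (real (j k) + 1))
      \<le> ln (real M + 1) * (C * real M / (real m)^2) ^ m)"
proof (intro exI[of _ 400] conjI allI impI)
  fix m M :: nat assume "2 \<le> m"
  then obtain s where m: "m = Suc (Suc s)" by (metis add_2_eq_Suc le_Suc_ex)
  define X where "X = ln (real M + 1) * real M ^ (s + 2) / (real s + 2) ^ (2 * s + 4)"
  have "(\<Sum>j\<in>incr_vecs m M. gap_weight m j) \<le> 2 * 200 ^ (s + 2) * X"
    unfolding m X_def by (rule sum_gap_weight_le)
  also have "\<dots> \<le> 2 ^ (s + 2) * 200 ^ (s + 2) * X"
    using power_increasing[of 1 "s + 2" "2::real"] by (intro mult_right_mono) (simp_all add: X_def)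
  also have "\<dots> = 400 ^ (s + 2) * X"
    by (simp flip: power_mult_distrib)
  also have "\<dots> = ln (real M + 1) * (400 * real M / real m ^ 2) ^ m"
  proof -
    have "2 * m = 2 * s + 4" "real m = real s + 2" using m by simp_all
    then have "(real m ^ 2) ^ m = (real s + 2) ^ (2 * s + 4)"
      by (simp only: flip: power_mult)
    then show ?thesis
      by (simp add: X_def m power_divide power_mult_distrib)
  qed
  finally show "(\<Sum>j\<in>incr_vecs m M. \<Prod>k\<in>{1..<m}.
      (real (j (Suc k)) - real (j k)) / (real (j k) + 1))
    \<le> ln (real M + 1) * (400 * real M / real m ^ 2) ^ m"
    by (simp add: gap_weight_def)
qed simp

end
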